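(* Let $n\ge2$, $\mathbf{q}\in\mathbb{R}^n$ and $1/n<t<1$. Then there exists a maximizer $\mathbf{p}^*$ of $\mathbf{p}\cdot\mathbf{q}$ over $P(t)$ with $\mathbf{p}^*\cdot\mathbf{p}^*=t$. Consequently, $\max_{\mathbf{p}\in P(t)}\mathbf{p}\cdot\mathbf{q}=\max\{\mathbf{p}\cdot\mathbf{q}:\mathbf{p}\ge0,\ \sum_i\mathbf{p}_i=1,\ \mathbf{p}\cdot\mathbf{p}=t\}$.
   Context: $P(t)=\{\mathbf{p}\in\mathbb{R}^n:\mathbf{p}\ge0,\ \sum_i\mathbf{p}_i=1,\ \mathbf{p}\cdot\mathbf{p}\le t\}$. *)

theory Defs
  imports "HOL-Analysis.Analysis"
begin

definition Pset :: "real \<Rightarrow> (real ^ 'n) set" where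
  "Pset t = {p. (\<forall>i. p $ i \<ge> 0) \<and> (\<Sum>i\<in>UNIV. p $ i) = 1 \<and> p \<bullet> p \<le> t}"

definition Sset :: "real \<Rightarrow> (real ^ 'n) set" where
  "Sset t = {p. (\<forall>i. p $ i \<ge> 0) \<and> (\<Sum>i\<in>UNIV. p $ i) = 1 \<and> p \<bullet> p = t}"

end

theory Submission
  imports Defs
begin

text \<open>
  A maximiser p0 of the linear functional p \<mapsto> p \<bullet> q over the compact set P(t) exists.
  If p0 \<bullet> p0 < t, move p0 along the segment towards the vertex e_k of the simplex at
  which q is largest: the functional does not decrease along this segment, the simplex is
  convex, and e_k \<bullet> e_k = 1 \<ge> t, so by continuity the segment meets the sphere
  p \<bullet> p = t inside the simplex at another maximiser.
\<close>

definition prob_simplex :: "(real ^ 'n) set" where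
  "prob_simplex = {p. (\<forall>i. p $ i \<ge> 0) \<and> (\<Sum>i\<in>UNIV. p $ i) = 1}"

lemma Pset_eq: "Pset t = prob_simplex \<inter> {p. p \<bullet> p \<le> t}"
  by (auto simp: Pset_def prob_simplex_def)

lemma Sset_eq: "Sset t = prob_simplex \<inter> {p. p \<bullet> p = t}"
  by (auto simp: Sset_def prob_simplex_def)

lemma Sset_subset_Pset: "Sset t \<subseteq> Pset t"
  by (auto simp: Pset_eq Sset_eq)

lemma convex_prob_simplex: "convex prob_simplex"
  unfolding convex_def prob_simplex_def
  by (auto simp: sum.distrib simp flip: sum_distrib_left)

lemma axis_in_prob_simplex: "axis k 1 \<in> prob_simplex"
  by (simp add: prob_simplex_def axis_def)

lemma vec_max_component:
  fixes q :: "'a :: linorder ^ 'n"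
  obtains k where "\<And>i. q $ i \<le> q $ k"
proof -
  have "Max (range (($) q)) \<in> range (($) q)"
    by (intro Max_in) auto
  then obtain k where "Max (range (($) q)) = q $ k"
    by blast
  moreover have "q $ i \<le> Max (range (($) q))" for i
    by (intro Max_ge) auto
  ultimately show ?thesis
    using that by metis
qed

lemma prob_simplex_inner_le_max_component:
  assumes "p \<in> prob_simplex" and "\<And>i. q $ i \<le> q $ k"
  shows "p \<bullet> q \<le> q $ k"
proof -
  have "p \<bullet> q = (\<Sum>i\<in>UNIV. p $ i * q $ i)"
    by (simp add: inner_vec_def)
  also have "\<dots> \<le> (\<Sum>i\<in>UNIV. p $ i * q $ k)"
    using assms by (intro sum_mono mult_left_mono) (auto simp: prob_simplex_def)
  also have "\<dots> = q $ k"
    using assms(1) by (simp add: prob_simplex_def flip: sum_distrib_right)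
  finally show ?thesis .
qed

lemma compact_Pset: "compact (Pset t :: (real ^ 'n) set)"
unfolding compact_eq_bounded_closed
proof
  show "closed (Pset t :: (real ^ 'n) set)"
    unfolding Pset_def
    by (intro closed_Collect_conj closed_Collect_all closed_Collect_le closed_Collect_eq
        continuous_intros)
  have "Pset t \<subseteq> cball (0 :: real ^ 'n) (sqrt t)"
    by (auto simp: Pset_def norm_eq_sqrt_inner intro: real_sqrt_le_mono)
  then show "bounded (Pset t :: (real ^ 'n) set)"
    using bounded_cball bounded_subset by blast
qed

lemma uniform_in_Pset:
  assumes "1 / real CARD('n) \<le> t"
  shows "(\<chi> i. 1 / real CARD('n)) \<in> (Pset t :: (real ^ 'n) set)"
  using assms by (simp add: Pset_def inner_vec_def power2_eq_square)

lemma closed_segment_meets_sphere: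
  fixes x y :: "'a :: real_inner"
  assumes "x \<bullet> x \<le> t" and "t \<le> y \<bullet> y"
  obtains z where "z \<in> closed_segment x y" and "z \<bullet> z = t"
proof -
  have "connected ((\<lambda>z. z \<bullet> z) ` closed_segment x y)"
    by (intro connected_continuous_image continuous_intros connected_segment)
  then have "t \<in> (\<lambda>z. z \<bullet> z) ` closed_segment x y"
    using assms unfolding connected_iff_interval by blast
  then show ?thesis
    using that by blast
qed

lemma inner_closed_segment_ge:
  assumes "z \<in> closed_segment x y" and "x \<bullet> q \<le> y \<bullet> q"
  shows "x \<bullet> q \<le> z \<bullet> q"
proof -
  obtain u :: real where u: "0 \<le> u" "u \<le> 1" and z: "z = (1 - u) *\<^sub>R x + u *\<^sub>R y"
    using assms(1) by (auto simp: closed_segment_def)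
  have "x \<bullet> q = (1 - u) * (x \<bullet> q) + u * (x \<bullet> q)"
    by (simp add: algebra_simps)
  also have "\<dots> \<le> (1 - u) * (x \<bullet> q) + u * (y \<bullet> q)"
    using u assms(2) by (intro add_left_mono mult_left_mono)
  also have "\<dots> = z \<bullet> q"
    by (simp add: z inner_add_left)
  finally show ?thesis .
qed

lemma Pset_max_attained_in_Sset:
  fixes q :: "real ^ 'n"
  assumes "1 / real CARD('n) \<le> t" and "t \<le> 1"
  obtains ps where "ps \<in> Sset t" and "\<And>p. p \<in> Pset t \<Longrightarrow> p \<bullet> q \<le> ps \<bullet> q"
proof -
  have nonempty: "Pset t \<noteq> ({} :: (real ^ 'n) set)"
    using uniform_in_Pset [OF assms(1)] by blast
  have "continuous_on (Pset t) (\<lambda>p. p \<bullet> q)"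
    by (intro continuous_intros)
  then obtain p0 where p0: "p0 \<in> Pset t" and p0_max: "\<forall>p \<in> Pset t. p \<bullet> q \<le> p0 \<bullet> q"
    using continuous_attains_sup [OF compact_Pset nonempty] by blast
  obtain k where k: "\<And>i. q $ i \<le> q $ k"
    using vec_max_component [of q] by blast
  define e :: "real ^ 'n" where "e = axis k 1"
  have p0_simplex: "p0 \<in> prob_simplex" and p0_ball: "p0 \<bullet> p0 \<le> t"
    using p0 by (auto simp: Pset_eq)
  have "t \<le> e \<bullet> e"
    using assms(2) by (simp add: e_def)
  with p0_ball obtain ps where ps_seg: "ps \<in> closed_segment p0 e" and ps_sphere: "ps \<bullet> ps = t"
    by (rule closed_segment_meets_sphere)
  have "closed_segment p0 e \<subseteq> prob_simplex"
    unfolding e_def by (intro closed_segment_subset p0_simplex axis_in_prob_simplex convex_prob_simplex)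
  with ps_seg have "ps \<in> prob_simplex"
    by blast
  with ps_sphere have ps_S: "ps \<in> Sset t"
    by (simp add: Sset_eq)
  have "p0 \<bullet> q \<le> e \<bullet> q"
    using prob_simplex_inner_le_max_component [OF p0_simplex k] by (simp add: e_def inner_axis')
  with ps_seg have "p0 \<bullet> q \<le> ps \<bullet> q"
    by (rule inner_closed_segment_ge)
  with ps_S p0_max show ?thesis
    using that by fastforce
qed

theorem lemma6:
  fixes q :: "real ^ 'n" and t :: real
  assumes "CARD('n) \<ge> 2"
    and "1 / real CARD('n) < t" and "t < 1"
  shows "(\<exists>ps \<in> Pset t. (\<forall>p \<in> Pset t. p \<bullet> q \<le> ps \<bullet> q) \<and> ps \<bullet> ps = t)
         \<and> (\<exists>m. m \<in> (\<lambda>p. p \<bullet> q) ` (Pset t) \<and> m \<in> (\<lambda>p. p \<bullet> q) ` (Sset t)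
                \<and> (\<forall>p \<in> Pset t. p \<bullet> q \<le> m) \<and> (\<forall>p \<in> Sset t. p \<bullet> q \<le> m)
                \<and> (SUP p \<in> Pset t. p \<bullet> q) = m \<and> (SUP p \<in> Sset t. p \<bullet> q) = m)"
proof -
  \<comment> \<open>Only 1 / CARD('n) \<le> t \<le> 1 is needed.\<close>
  obtain ps where ps_S: "ps \<in> Sset t" and ps_max: "\<And>p. p \<in> Pset t \<Longrightarrow> p \<bullet> q \<le> ps \<bullet> q"
    using Pset_max_attained_in_Sset assms(2,3) by (metis less_imp_le)
  have ps_P: "ps \<in> Pset t" and ps_sphere: "ps \<bullet> ps = t"
    using ps_S Sset_subset_Pset by (auto simp: Sset_def)
  have ps_max_S: "\<And>p. p \<in> Sset t \<Longrightarrow> p \<bullet> q \<le> ps \<bullet> q"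
    using ps_max Sset_subset_Pset by blast
  have "(SUP p \<in> Pset t. p \<bullet> q) = ps \<bullet> q" and "(SUP p \<in> Sset t. p \<bullet> q) = ps \<bullet> q"
    using ps_P ps_S ps_max ps_max_S by (auto intro: cSup_eq_maximum)
  then show ?thesis
    using ps_P ps_S ps_max ps_max_S ps_sphere by blast
qed

end
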